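(* Let $L:\mathbb{R}^n\times\mathbb{R}\times\mathbb{R}^n\to\mathbb{R}$ be a $C^2$ function satisfying (L1)–(L3) below, and set $L_0(x,v)=L(x,0,v)$: (L1) $L_{vv}(x,r,v)>0$ for all $(x,r,v)$; (L2) for each $r\in\mathbb{R}$ there exist superlinear nondecreasing $\overline{\theta}_r,\theta_r:[0,+\infty)\to[0,+\infty)$ with $\theta_r(0)=0$ and $c_r>0$ such that $\overline{\theta}_r(|v|)\geqslant L(x,r,v)\geqslant\theta_r(|v|)-c_r$ for all $(x,v)$; (L3) there exists $K>0$ with $|L_r(x,r,v)|\leqslant K$ for all $(x,r,v)$. Let $L^\lambda:\mathbb{R}^n\times\mathbb{R}\times\mathbb{R}^n\to\mathbb{R}$ be a $C^2$ function satisfying (L1), (L2) and $|L^\lambda_u(x,u,v)|\leqslant K_\lambda$ for all $(x,u,v)$, and set $L_\lambda(x,v)=L^\lambda(x,0,v)$. Let $x\in\mathbb{R}^n$, $t,R>0$, $u\in\mathbb{R}$, and $y\in\mathbb{R}^n$ with $|y-x|\leqslant R$. Let $\xi\in\Gamma^t_{y,x}$ be a minimizer for $A_t(y,x)$, and let $u^\lambda_\xi$ be the solution of $\dot u^\lambda_\xi(s)=L^\lambda(\xi(s),u^\lambda_\xi(s),\dot\xi(s))$ a.e. on $[0,t]$ with $u^\lambda_\xi(0)=u$. Then for all $s\in[0,t]$, $$|u^\lambda_\xi(s)|\leqslant tF(t,R/t)+C(t)|u|+\exp(K_\lambda t)\int_0^t|L_\lambda(\xi,\dot\xi)-L_0(\xi,\dot\xi)|\,ds,$$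 where $F(t,R/t)=(\overline{\theta}_0(R/t)+2c_0)\exp(K_\lambda t)$ and $C(t)=tK_\lambda\exp(K_\lambda t)+1$.
   Context: $\Gamma^t_{y,x}=\{\xi\in W^{1,1}([0,t],\mathbb{R}^n):\xi(0)=y,\ \xi(t)=x\}$. $A_t(y,x)=\inf_{\xi\in\Gamma^t_{y,x}}\int_0^tL_0(\xi(s),\dot\xi(s))\,ds$ is the least action (fundamental solution) of $L_0$. $\overline{\theta}_0$ and $c_0$ are the function and constant from (L2) for $L$ with $r=0$. *)

theory Defs
  imports "HOL-Analysis.Analysis"
begin

definition C2 :: "('b::euclidean_space \<Rightarrow> real) \<Rightarrow> bool" where
  "C2 f \<longleftrightarrow> (\<exists>f' f''.
      (\<forall>z. (f has_derivative blinfun_apply (f' z)) (at z)) \<and>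
      (\<forall>z. (f' has_derivative blinfun_apply (f'' z)) (at z)) \<and>
      continuous_on UNIV f'')"

definition uncurry3 :: "('a \<Rightarrow> real \<Rightarrow> 'a \<Rightarrow> real) \<Rightarrow> 'a \<times> real \<times> 'a \<Rightarrow> real" where
  "uncurry3 L = (\<lambda>(x, r, v). L x r v)"

text \<open>(L1): L_vv(x,r,v) is positive definite, i.e. w^T L_vv w > 0 for w \<noteq> 0,
  where w^T L_vv w is the second derivative of s \<mapsto> L(x,r,v+sw) at 0.\<close>
definition L1 :: "('a::euclidean_space \<Rightarrow> real \<Rightarrow> 'a \<Rightarrow> real) \<Rightarrow> bool" where
  "L1 L \<longleftrightarrow> (\<forall>x r v w. w \<noteq> 0 \<longrightarrow>
      deriv (deriv (\<lambda>s. L x r (v + s *\<^sub>R w))) 0 > 0)"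

definition superlinear :: "(real \<Rightarrow> real) \<Rightarrow> bool" where
  "superlinear \<theta> \<longleftrightarrow> filterlim (\<lambda>s. \<theta> s / s) at_top at_top"

definition L2_at :: "('a::euclidean_space \<Rightarrow> real \<Rightarrow> 'a \<Rightarrow> real) \<Rightarrow> real
     \<Rightarrow> (real \<Rightarrow> real) \<Rightarrow> (real \<Rightarrow> real) \<Rightarrow> real \<Rightarrow> bool" where
  "L2_at L r \<theta>b \<theta> c \<longleftrightarrow>
     superlinear \<theta>b \<and> superlinear \<theta> \<and>
     mono_on {0..} \<theta>b \<and> mono_on {0..} \<theta> \<and>
     (\<forall>s\<ge>0. \<theta>b s \<ge> 0 \<and> \<theta> s \<ge> 0) \<and> \<theta> 0 = 0 \<and> c > 0 \<and>
     (\<forall>x v. \<theta>b (norm v) \<ge> L x r v \<and> L x r v \<ge> \<theta> (norm v) - c)"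

definition L2 :: "('a::euclidean_space \<Rightarrow> real \<Rightarrow> 'a \<Rightarrow> real) \<Rightarrow> bool" where
  "L2 L \<longleftrightarrow> (\<forall>r. \<exists>\<theta>b \<theta> c. L2_at L r \<theta>b \<theta> c)"

definition partial_r_bounded :: "('a \<Rightarrow> real \<Rightarrow> 'a \<Rightarrow> real) \<Rightarrow> real \<Rightarrow> bool" where
  "partial_r_bounded L K \<longleftrightarrow> (\<forall>x r v. \<bar>deriv (\<lambda>r. L x r v) r\<bar> \<le> K)"

text \<open>W^{1,1}([0,t],R^n): absolutely continuous curves, i.e. indefinite integrals
  of integrable functions.\<close>
definition W11 :: "real \<Rightarrow> (real \<Rightarrow> 'a::euclidean_space) \<Rightarrow> bool" where
  "W11 t \<xi> \<longleftrightarrow> (\<exists>g. g absolutely_integrable_on {0..t} \<and>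
      (\<forall>s\<in>{0..t}. \<xi> s = \<xi> 0 + integral {0..s} g))"

definition Gamma :: "real \<Rightarrow> 'a::euclidean_space \<Rightarrow> 'a \<Rightarrow> (real \<Rightarrow> 'a) set" where
  "Gamma t y x = {\<xi>. W11 t \<xi> \<and> \<xi> 0 = y \<and> \<xi> t = x}"

definition lag_along :: "('a::euclidean_space \<Rightarrow> 'a \<Rightarrow> real) \<Rightarrow> (real \<Rightarrow> 'a) \<Rightarrow> real \<Rightarrow> real" where
  "lag_along L0 \<xi> = (\<lambda>s. L0 (\<xi> s) (vector_derivative \<xi> (at s)))"

text \<open>Since L0 is bounded below, a curve whose action is not integrable has action +\<infinity>;
  so \<xi> is a minimizer iff its action is finite and \<le> every finite action.\<close>
definition minimizer :: "('a::euclidean_space \<Rightarrow> 'a \<Rightarrow> real) \<Rightarrow> real \<Rightarrow> 'a \<Rightarrow> 'a \<Rightarrow> (real \<Rightarrow> 'a) \<Rightarrow> bool" where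
  "minimizer L0 t y x \<xi> \<longleftrightarrow> \<xi> \<in> Gamma t y x \<and>
     lag_along L0 \<xi> integrable_on {0..t} \<and>
     (\<forall>\<eta>\<in>Gamma t y x. lag_along L0 \<eta> integrable_on {0..t} \<longrightarrow>
        integral {0..t} (lag_along L0 \<xi>) \<le> integral {0..t} (lag_along L0 \<eta>))"

end

theory Submission
  imports Defs
begin

(* Along the minimizer xi write U' = Llam(xi, U, xi') as Llam(xi, 0, xi') plus an error of size at
   most Klam |U|.  Integrating, |U s| <= |u| + int |Llam(xi,0,xi') - L0(xi,xi')| + int L0(xi,xi')
   + 2 c0 t + Klam int_0^s |U|; here int L0(xi,xi') is the minimal action, hence at most the action
   t thetabar0(R/t) of the straight segment from y to x, and 2 c0 t compensates for L0 >= -c0.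
   Gronwall's inequality then gives the bound.  The technical point is that xi' is Lebesgue
   measurable, which makes Llam(xi, 0, xi') integrable. *)

section \<open>Measurability of the derivative of a continuous curve\<close>

definition difference_quotient :: "(real \<Rightarrow> 'a::real_normed_vector) \<Rightarrow> real \<Rightarrow> real \<Rightarrow> 'a" where
  "difference_quotient f r h = (1 / h) *\<^sub>R (f (r + h) - f r)"

lemma has_vector_derivative_iff_tendsto_difference_quotient:
  fixes f :: "real \<Rightarrow> 'a::real_normed_vector"
  shows "(f has_vector_derivative l) (at r) \<longleftrightarrow> (difference_quotient f r \<longlongrightarrow> l) (at 0)"
proof -
  have eq: "norm (f (r + h) - f r - h *\<^sub>R l) / \<bar>h\<bar> = norm (difference_quotient f r h - l)"
    if "h \<noteq> 0" for h
  proof -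
    have "difference_quotient f r h - l = (1 / h) *\<^sub>R (f (r + h) - f r - h *\<^sub>R l)"
      using that by (simp add: difference_quotient_def algebra_simps)
    then show ?thesis by (simp add: divide_inverse abs_inverse mult.commute)
  qed
  have "(f has_vector_derivative l) (at r) \<longleftrightarrow>
      ((\<lambda>h. norm (f (r + h) - f r - h *\<^sub>R l) / \<bar>h\<bar>) \<longlongrightarrow> 0) (at 0)"
    unfolding has_vector_derivative_def has_derivative_at
    by (simp add: bounded_linear_scaleR_left)
  also have "\<dots> \<longleftrightarrow> ((\<lambda>h. norm (difference_quotient f r h - l)) \<longlongrightarrow> 0) (at 0)"
    by (rule tendsto_cong) (use eq in \<open>auto simp: eventually_at intro!: exI[of _ 1]\<close>)
  also have "\<dots> \<longleftrightarrow> (difference_quotient f r \<longlongrightarrow> l) (at 0)"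
    by (simp add: tendsto_norm_zero_iff LIM_zero_iff)
  finally show ?thesis .
qed

lemma ex_tendsto_at_0_iff_Cauchy:
  fixes F :: "real \<Rightarrow> 'a::{complete_space,real_normed_vector}"
  shows "(\<exists>l. (F \<longlongrightarrow> l) (at 0)) \<longleftrightarrow>
     (\<forall>e>0. \<exists>d>0. \<forall>h k. 0 < \<bar>h\<bar> \<and> \<bar>h\<bar> < d \<and> 0 < \<bar>k\<bar> \<and> \<bar>k\<bar> < d \<longrightarrow> dist (F h) (F k) < e)"
proof
  assume "\<exists>l. (F \<longlongrightarrow> l) (at 0)"
  then obtain l where l: "(F \<longlongrightarrow> l) (at 0)" by blast
  have "cauchy_filter (filtermap F (at 0))"
    using l unfolding filterlim_def by (rule nhds_imp_cauchy_filter)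
  then have c: "\<forall>e>0. \<exists>P. eventually P (at (0::real)) \<and> (\<forall>x y. P x \<and> P y \<longrightarrow> dist (F x) (F y) < e)"
    by (simp add: cauchy_filter_metric_filtermap)
  show "\<forall>e>0. \<exists>d>0. \<forall>h k. 0 < \<bar>h\<bar> \<and> \<bar>h\<bar> < d \<and> 0 < \<bar>k\<bar> \<and> \<bar>k\<bar> < d \<longrightarrow> dist (F h) (F k) < e"
  proof (intro allI impI)
    fix e :: real assume "e > 0"
    then obtain P where P: "eventually P (at (0::real))" "\<forall>x y. P x \<and> P y \<longrightarrow> dist (F x) (F y) < e"
      using c by blast
    then obtain d where d: "d > 0" "\<forall>x. x \<noteq> 0 \<and> dist x 0 < d \<longrightarrow> P x"
      unfolding eventually_at by blast
    show "\<exists>d>0. \<forall>h k. 0 < \<bar>h\<bar> \<and> \<bar>h\<bar> < d \<and> 0 < \<bar>k\<bar> \<and> \<bar>k\<bar> < d \<longrightarrow> dist (F h) (F k) < e"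
      using d P(2) by (intro exI[of _ d]) auto
  qed
next
  assume H: "\<forall>e>0. \<exists>d>0. \<forall>h k. 0 < \<bar>h\<bar> \<and> \<bar>h\<bar> < d \<and> 0 < \<bar>k\<bar> \<and> \<bar>k\<bar> < d \<longrightarrow> dist (F h) (F k) < e"
  have "cauchy_filter (filtermap F (at 0))"
    unfolding cauchy_filter_metric_filtermap
  proof (intro allI impI)
    fix e :: real assume "e > 0"
    then obtain d where d: "d > 0" "\<forall>h k. 0 < \<bar>h\<bar> \<and> \<bar>h\<bar> < d \<and> 0 < \<bar>k\<bar> \<and> \<bar>k\<bar> < d \<longrightarrow> dist (F h) (F k) < e"
      using H by blast
    show "\<exists>P. eventually P (at (0::real)) \<and> (\<forall>x y. P x \<and> P y \<longrightarrow> dist (F x) (F y) < e)"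
      using d by (intro exI[of _ "\<lambda>h. 0 < \<bar>h\<bar> \<and> \<bar>h\<bar> < d"]) (auto simp: eventually_at)
  qed
  moreover have "filtermap F (at (0::real)) \<noteq> bot" by (simp add: filtermap_bot_iff)
  ultimately obtain x where "filtermap F (at 0) \<le> nhds x"
    using complete_UNIV[unfolded complete_uniform, rule_format, of "filtermap F (at 0)"] by auto
  then show "\<exists>l. (F \<longlongrightarrow> l) (at 0)" unfolding filterlim_def by blast
qed

lemma le_on_open_if_le_on_rationals:
  fixes \<phi> :: "real \<Rightarrow> real"
  assumes "open W" and "continuous_on W \<phi>" and "\<And>q. q \<in> W \<Longrightarrow> q \<in> \<rat> \<Longrightarrow> \<phi> q \<le> c"
    and "x \<in> W"
  shows "\<phi> x \<le> c"
proof (rule ccontr)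
  assume "\<not> \<phi> x \<le> c"
  then have x: "x \<in> \<phi> -` {c<..} \<inter> W" using \<open>x \<in> W\<close> by auto
  have "open (\<phi> -` {c<..} \<inter> W)"
    using assms(1,2) continuous_on_open_vimage open_greaterThan by blast
  then obtain e where e: "e > 0" "ball x e \<subseteq> \<phi> -` {c<..} \<inter> W"
    using x open_contains_ball by blast
  obtain q where q: "q \<in> \<rat>" "x < q" "q < x + e" using Rats_dense_in_real[of x "x + e"] e by auto
  then have "q \<in> ball x e" by (auto simp: dist_real_def)
  then have "q \<in> W" "\<phi> q > c" using e(2) by auto
  then show False using q(1) assms(3) by force
qed

lemma dist_le_on_open_if_le_on_rationals:
  fixes F :: "real \<Rightarrow> 'a::metric_space"
  assumes W: "open W" and F: "continuous_on W F"
    and rat: "\<And>h k. h \<in> W \<Longrightarrow> k \<in> W \<Longrightarrow> h \<in> \<rat> \<Longrightarrow> k \<in> \<rat> \<Longrightarrow> dist (F h) (F k) \<le> c"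
    and "h \<in> W" "k \<in> W"
  shows "dist (F h) (F k) \<le> c"
proof -
  have rat_right: "dist (F h') (F k') \<le> c" if "h' \<in> W" "k' \<in> W" "k' \<in> \<rat>" for h' k'
  proof (rule le_on_open_if_le_on_rationals[OF W, of "\<lambda>h. dist (F h) (F k')"])
    show "continuous_on W (\<lambda>h. dist (F h) (F k'))" by (intro continuous_intros F)
  qed (use that rat in auto)
  show ?thesis
  proof (rule le_on_open_if_le_on_rationals[OF W, of "\<lambda>k. dist (F h) (F k)"])
    show "continuous_on W (\<lambda>k. dist (F h) (F k))" by (intro continuous_intros F)
  qed (use rat_right \<open>h \<in> W\<close> \<open>k \<in> W\<close> in auto)
qed

lemma rational_Cauchy_if_Cauchy_at_0:
  fixes F :: "real \<Rightarrow> 'a::metric_space"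
  assumes "\<forall>e>0. \<exists>d>0. \<forall>h k. 0 < \<bar>h\<bar> \<and> \<bar>h\<bar> < d \<and> 0 < \<bar>k\<bar> \<and> \<bar>k\<bar> < d \<longrightarrow> dist (F h) (F k) < e"
  shows "\<forall>m::nat. \<exists>j::nat. \<forall>h\<in>\<rat>. \<forall>k\<in>\<rat>.
      0 < \<bar>h\<bar> \<and> \<bar>h\<bar> < 1 / Suc j \<and> 0 < \<bar>k\<bar> \<and> \<bar>k\<bar> < 1 / Suc j \<and> h \<in> S \<and> k \<in> S \<longrightarrow>
      dist (F h) (F k) \<le> 1 / Suc m"
proof
  fix m :: nat
  obtain d where d: "d > 0"
    "\<forall>h k. 0 < \<bar>h\<bar> \<and> \<bar>h\<bar> < d \<and> 0 < \<bar>k\<bar> \<and> \<bar>k\<bar> < d \<longrightarrow> dist (F h) (F k) < 1 / Suc m"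
    using assms[rule_format, of "1 / Suc m"] by auto
  obtain j where "inverse (real (Suc j)) < d" using reals_Archimedean[OF d(1)] by blast
  then have j: "1 / Suc j < d" by (simp add: inverse_eq_divide)
  show "\<exists>j::nat. \<forall>h\<in>\<rat>. \<forall>k\<in>\<rat>.
      0 < \<bar>h\<bar> \<and> \<bar>h\<bar> < 1 / Suc j \<and> 0 < \<bar>k\<bar> \<and> \<bar>k\<bar> < 1 / Suc j \<and> h \<in> S \<and> k \<in> S \<longrightarrow>
      dist (F h) (F k) \<le> 1 / Suc m"
  proof (intro exI[of _ j] ballI impI)
    fix h k :: real
    assume hk: "0 < \<bar>h\<bar> \<and> \<bar>h\<bar> < 1 / Suc j \<and> 0 < \<bar>k\<bar> \<and> \<bar>k\<bar> < 1 / Suc j \<and> h \<in> S \<and> k \<in> S"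
    then have "dist (F h) (F k) < 1 / Suc m" using j by (intro d(2)[rule_format]) simp
    then show "dist (F h) (F k) \<le> 1 / Suc m" by (rule less_imp_le)
  qed
qed

lemma Cauchy_at_0_if_rational_Cauchy:
  fixes F :: "real \<Rightarrow> 'a::metric_space"
  assumes S: "open S" "0 \<in> S" and F: "continuous_on (S - {0}) F"
    and rat: "\<forall>m::nat. \<exists>j::nat. \<forall>h\<in>\<rat>. \<forall>k\<in>\<rat>.
      0 < \<bar>h\<bar> \<and> \<bar>h\<bar> < 1 / Suc j \<and> 0 < \<bar>k\<bar> \<and> \<bar>k\<bar> < 1 / Suc j \<and> h \<in> S \<and> k \<in> S \<longrightarrow>
      dist (F h) (F k) \<le> 1 / Suc m"
  shows "\<forall>e>0. \<exists>d>0. \<forall>h k. 0 < \<bar>h\<bar> \<and> \<bar>h\<bar> < d \<and> 0 < \<bar>k\<bar> \<and> \<bar>k\<bar> < d \<longrightarrow> dist (F h) (F k) < e"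
proof (intro allI impI)
  fix e :: real assume "e > 0"
  obtain m where "inverse (real (Suc m)) < e" using reals_Archimedean[OF \<open>e > 0\<close>] by blast
  then have m: "1 / Suc m < e" by (simp add: inverse_eq_divide)
  obtain j where j: "\<forall>h\<in>\<rat>. \<forall>k\<in>\<rat>.
      0 < \<bar>h\<bar> \<and> \<bar>h\<bar> < 1 / Suc j \<and> 0 < \<bar>k\<bar> \<and> \<bar>k\<bar> < 1 / Suc j \<and> h \<in> S \<and> k \<in> S \<longrightarrow>
      dist (F h) (F k) \<le> 1 / Suc m"
    using rat by blast
  obtain \<delta> where \<delta>: "\<delta> > 0" "ball 0 \<delta> \<subseteq> S" using S open_contains_ball by blast
  define W where "W = {h. \<bar>h\<bar> < 1 / Suc j} \<inter> (S - {0})"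
  have "open W" unfolding W_def
    by (intro open_Int open_delete S(1) open_Collect_less continuous_intros)
  moreover have "continuous_on W F" using F by (rule continuous_on_subset) (auto simp: W_def)
  ultimately have W: "dist (F h) (F k) \<le> 1 / Suc m" if "h \<in> W" "k \<in> W" for h k
    by (rule dist_le_on_open_if_le_on_rationals) (use j that in \<open>auto simp: W_def\<close>)
  show "\<exists>d>0. \<forall>h k. 0 < \<bar>h\<bar> \<and> \<bar>h\<bar> < d \<and> 0 < \<bar>k\<bar> \<and> \<bar>k\<bar> < d \<longrightarrow> dist (F h) (F k) < e"
  proof (intro exI[of _ "min (1 / Suc j) \<delta>"] conjI allI impI)
    show "0 < min (1 / Suc j) \<delta>" using \<delta>(1) by simp
    fix h k :: real assume "0 < \<bar>h\<bar> \<and> \<bar>h\<bar> < min (1 / Suc j) \<delta> \<and> 0 < \<bar>k\<bar> \<and> \<bar>k\<bar> < min (1 / Suc j) \<delta>"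
    then have "h \<in> W" "k \<in> W" using \<delta>(2) by (auto simp: W_def subset_iff)
    then show "dist (F h) (F k) < e" using W m by fastforce
  qed
qed

lemma vector_differentiable_at_iff_rational_Cauchy:
  fixes f :: "real \<Rightarrow> 'a::euclidean_space"
  assumes f: "continuous_on {a..b} f" and r: "r \<in> {a<..<b}"
  shows "(\<exists>l. (f has_vector_derivative l) (at r)) \<longleftrightarrow>
    (\<forall>m::nat. \<exists>j::nat. \<forall>h\<in>\<rat>. \<forall>k\<in>\<rat>.
       0 < \<bar>h\<bar> \<and> \<bar>h\<bar> < 1 / Suc j \<and> 0 < \<bar>k\<bar> \<and> \<bar>k\<bar> < 1 / Suc j \<and>
       r + h \<in> {a<..<b} \<and> r + k \<in> {a<..<b} \<longrightarrow>
       dist (difference_quotient f r h) (difference_quotient f r k) \<le> 1 / Suc m)"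
  (is "_ \<longleftrightarrow> ?rational")
proof -
  let ?\<Delta> = "difference_quotient f r"
  define S where "S = {h. a < r + h \<and> r + h < b}"
  have S: "open S" "0 \<in> S" using r unfolding S_def
    by (auto intro!: open_Collect_conj open_Collect_less continuous_intros)
  have "continuous_on (S - {0}) (\<lambda>h. f (r + h))"
    by (rule continuous_on_compose2[OF f]) (auto simp: S_def intro!: continuous_intros)
  then have \<Delta>: "continuous_on (S - {0}) ?\<Delta>"
    unfolding difference_quotient_def by (intro continuous_intros) auto
  have rational_iff: "?rational \<longleftrightarrow> (\<forall>m::nat. \<exists>j::nat. \<forall>h\<in>\<rat>. \<forall>k\<in>\<rat>.
      0 < \<bar>h\<bar> \<and> \<bar>h\<bar> < 1 / Suc j \<and> 0 < \<bar>k\<bar> \<and> \<bar>k\<bar> < 1 / Suc j \<and> h \<in> S \<and> k \<in> S \<longrightarrow>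
      dist (?\<Delta> h) (?\<Delta> k) \<le> 1 / Suc m)"
    by (simp add: S_def)
  show ?thesis
    unfolding has_vector_derivative_iff_tendsto_difference_quotient ex_tendsto_at_0_iff_Cauchy rational_iff
    by (rule iffI, erule rational_Cauchy_if_Cauchy_at_0, erule Cauchy_at_0_if_rational_Cauchy[OF S \<Delta>])
qed

lemma open_far_difference_quotients:
  fixes f :: "real \<Rightarrow> 'a::real_normed_vector"
  assumes f: "continuous_on {a..b} f"
  shows "open {r\<in>{a<..<b}. r + h \<in> {a<..<b} \<and> r + k \<in> {a<..<b} \<and>
    c < dist (difference_quotient f r h) (difference_quotient f r k)}"
proof -
  define J where "J = {r. a < r \<and> r < b \<and> a < r + h \<and> r + h < b \<and> a < r + k \<and> r + k < b}"
  have "open J" unfolding J_def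
    by (intro open_Collect_conj open_Collect_less continuous_intros)
  have "continuous_on J (\<lambda>r. f (r + h))" "continuous_on J (\<lambda>r. f (r + k))" "continuous_on J f"
    by (auto simp: J_def intro!: continuous_on_compose2[OF f] continuous_intros)
  then have "continuous_on J (\<lambda>r. dist (difference_quotient f r h) (difference_quotient f r k))"
    unfolding difference_quotient_def by (auto simp: add.commute intro!: continuous_intros)
  then have "open ((\<lambda>r. dist (difference_quotient f r h) (difference_quotient f r k)) -` {c<..} \<inter> J)"
    using \<open>open J\<close> continuous_on_open_vimage open_greaterThan by blast
  moreover have "(\<lambda>r. dist (difference_quotient f r h) (difference_quotient f r k)) -` {c<..} \<inter> J =
    {r\<in>{a<..<b}. r + h \<in> {a<..<b} \<and> r + k \<in> {a<..<b} \<and>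
      c < dist (difference_quotient f r h) (difference_quotient f r k)}"
    unfolding J_def by auto
  ultimately show ?thesis by simp
qed

lemma sets_borel_vector_differentiable_points:
  fixes f :: "real \<Rightarrow> 'a::euclidean_space"
  assumes f: "continuous_on {a..b} f"
  shows "{r\<in>{a<..<b}. \<exists>l. (f has_vector_derivative l) (at r)} \<in> sets borel"
proof -
  let ?\<Delta> = "difference_quotient f"
  define B where "B m j h k = {r\<in>{a<..<b}. 0 < \<bar>h\<bar> \<and> \<bar>h\<bar> < 1 / Suc j \<and> 0 < \<bar>k\<bar> \<and> \<bar>k\<bar> < 1 / Suc j \<and>
      r + h \<in> {a<..<b} \<and> r + k \<in> {a<..<b} \<and> 1 / Suc m < dist (?\<Delta> r h) (?\<Delta> r k)}"
    for m j :: nat and h k :: real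
  have open_B: "open (B m j h k)" for m j h k
  proof -
    have "B m j h k = (if 0 < \<bar>h\<bar> \<and> \<bar>h\<bar> < 1 / Suc j \<and> 0 < \<bar>k\<bar> \<and> \<bar>k\<bar> < 1 / Suc j
      then {r\<in>{a<..<b}. r + h \<in> {a<..<b} \<and> r + k \<in> {a<..<b} \<and> 1 / Suc m < dist (?\<Delta> r h) (?\<Delta> r k)}
      else {})"
      unfolding B_def by auto
    then show ?thesis using open_far_difference_quotients[OF f] by simp
  qed
  have mem: "r \<in> (\<Inter>m. \<Union>j. \<Inter>h\<in>\<rat>. \<Inter>k\<in>\<rat>. - B m j h k) \<longleftrightarrow>
      (\<forall>m::nat. \<exists>j::nat. \<forall>h\<in>\<rat>. \<forall>k\<in>\<rat>.
       0 < \<bar>h\<bar> \<and> \<bar>h\<bar> < 1 / Suc j \<and> 0 < \<bar>k\<bar> \<and> \<bar>k\<bar> < 1 / Suc j \<and>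
       r + h \<in> {a<..<b} \<and> r + k \<in> {a<..<b} \<longrightarrow> dist (?\<Delta> r h) (?\<Delta> r k) \<le> 1 / Suc m)"
    if "r \<in> {a<..<b}" for r
    using that unfolding B_def by (simp add: not_less imp_conv_disj del: of_nat_Suc)
  have eq: "{r\<in>{a<..<b}. \<exists>l. (f has_vector_derivative l) (at r)} =
     {a<..<b} \<inter> (\<Inter>m. \<Union>j. \<Inter>h\<in>\<rat>. \<Inter>k\<in>\<rat>. - B m j h k)"
  proof (intro set_eqI)
    fix r
    show "r \<in> {r\<in>{a<..<b}. \<exists>l. (f has_vector_derivative l) (at r)} \<longleftrightarrow>
      r \<in> {a<..<b} \<inter> (\<Inter>m. \<Union>j. \<Inter>h\<in>\<rat>. \<Inter>k\<in>\<rat>. - B m j h k)"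
    proof (cases "r \<in> {a<..<b}")
      case True
      show ?thesis
        unfolding Int_iff mem_Collect_eq vector_differentiable_at_iff_rational_Cauchy[OF f True]
          mem[OF True] using True by (simp only: simp_thms)
    qed auto
  qed
  have "(\<Inter>h\<in>\<rat>. \<Inter>k\<in>\<rat>. - B m j h k) \<in> sets borel" for m j
    by (intro borel_closed closed_INT ballI closed_Compl open_B)
  then have "(\<Inter>m. \<Union>j. \<Inter>h\<in>\<rat>. \<Inter>k\<in>\<rat>. - B m j h k) \<in> sets borel"
    by (intro sets.countable_INT sets.countable_UN) auto
  moreover have "{a<..<b::real} \<in> sets borel" by simp
  ultimately show ?thesis unfolding eq by (rule sets.Int[rotated])
qed

lemma tendsto_sampled_difference_quotient:
  assumes "(f has_vector_derivative f') (at r)" and r: "r \<in> {a<..<b}"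
    and g: "\<And>s. s \<in> {a<..<b} \<Longrightarrow> g s = f s"
  shows "(\<lambda>i. difference_quotient g r (1 / Suc i)) \<longlonglongrightarrow> f'"
proof -
  have "filterlim (\<lambda>i. 1 / real (Suc i)) (at 0) sequentially"
    by (rule filterlim_atI) (use LIMSEQ_inverse_real_of_nat in \<open>auto simp: inverse_eq_divide\<close>)
  with assms(1) have "(\<lambda>i. difference_quotient f r (1 / Suc i)) \<longlonglongrightarrow> f'"
    unfolding has_vector_derivative_iff_tendsto_difference_quotient by (rule filterlim_compose)
  moreover obtain N where N: "inverse (real (Suc N)) < b - r"
    using reals_Archimedean[of "b - r"] r by auto
  have "\<forall>\<^sub>F i in sequentially. difference_quotient f r (1 / Suc i) = difference_quotient g r (1 / Suc i)"
    unfolding eventually_sequentially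
  proof (intro exI[of _ N] allI impI)
    fix i assume "N \<le> i"
    then have "1 / real (Suc i) \<le> 1 / real (Suc N)" by (simp add: frac_le)
    then have "r + 1 / real (Suc i) < b" using N by (simp add: inverse_eq_divide)
    moreover have "a < r" "0 < 1 / real (Suc i)" using r by simp_all
    ultimately have "a < r + 1 / Suc i" "r + 1 / Suc i < b" by linarith+
    then show "difference_quotient f r (1 / Suc i) = difference_quotient g r (1 / Suc i)"
      using r by (simp add: difference_quotient_def g)
  qed
  ultimately show ?thesis by (rule Lim_transform_eventually)
qed

lemma vector_derivative_junk:
  assumes "\<nexists>l. (f has_vector_derivative l) (at r)"
  shows "vector_derivative f (at r) = (SOME l. False)"
proof -
  have "(\<lambda>l. (f has_vector_derivative l) (at r)) = (\<lambda>_. False)" using assms by auto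
  then show ?thesis by (simp add: vector_derivative_def)
qed

lemma borel_measurable_vector_derivative:
  fixes f :: "real \<Rightarrow> 'a::euclidean_space"
  assumes f: "continuous_on {a..b} f" and "a \<le> b"
  shows "(\<lambda>r. vector_derivative f (at r)) \<in> borel_measurable (lebesgue_on {a..b})"
proof -
  define D where "D = {r\<in>{a<..<b}. \<exists>l. (f has_vector_derivative l) (at r)}"
  have "D \<inter> {a..b} \<in> sets lebesgue"
    using sets_borel_vector_differentiable_points[OF f] unfolding D_def by (intro sets.Int) auto
  then have D: "D \<inter> space (lebesgue_on {a..b}) \<in> sets (lebesgue_on {a..b})"
    by (simp add: sets_restrict_space_iff)
  define junk :: 'a where "junk = (SOME l. False)"
  define w where "w r = (if r \<in> D then vector_derivative f (at r) else junk)" for r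
  define g where "g s = f (max a (min b s))" for s
  have "continuous_on UNIV g" unfolding g_def
    by (rule continuous_on_compose2[OF f]) (use \<open>a \<le> b\<close> in \<open>auto intro!: continuous_intros\<close>)
  then have "continuous_on UNIV (\<lambda>r. difference_quotient g r (1 / Suc i))" for i
    unfolding difference_quotient_def
    by (intro continuous_intros continuous_on_compose2[OF \<open>continuous_on UNIV g\<close>]) auto
  then have "(\<lambda>r. difference_quotient g r (1 / Suc i)) \<in> borel_measurable (lebesgue_on {a..b})" for i
    by (intro continuous_imp_measurable_on_sets_lebesgue) (auto intro: continuous_on_subset)
  then have Q: "(\<lambda>r. if r \<in> D then difference_quotient g r (1 / Suc i) else junk)
      \<in> borel_measurable (lebesgue_on {a..b})" for i
    by (rule measurable_If_set[OF _ measurable_const D]) simp_all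
  have "w \<in> borel_measurable (lebesgue_on {a..b})"
  proof (rule borel_measurable_LIMSEQ_metric[OF Q])
    fix r
    show "(\<lambda>i. if r \<in> D then difference_quotient g r (1 / Suc i) else junk) \<longlonglongrightarrow> w r"
    proof (cases "r \<in> D")
      case True
      then have r: "r \<in> {a<..<b}" and "\<exists>l. (f has_vector_derivative l) (at r)"
        by (auto simp: D_def)
      then have "(f has_vector_derivative vector_derivative f (at r)) (at r)"
        by (metis vector_derivative_at)
      from tendsto_sampled_difference_quotient[OF this r, of g] True show ?thesis
        by (simp add: w_def g_def)
    qed (simp add: w_def)
  qed
  then have "w measurable_on {a..b}" by (simp add: measurable_on_iff_borel_measurable)
  then have "(\<lambda>r. vector_derivative f (at r)) measurable_on {a..b}"
    by (rule measurable_on_spike[where S = "{a, b}"])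
      (auto simp: w_def D_def junk_def vector_derivative_junk)
  then show ?thesis by (simp add: measurable_on_iff_borel_measurable)
qed

section \<open>Integral inequalities\<close>

lemma integral_abs_nonneg: "0 \<le> integral S (\<lambda>x. \<bar>f x\<bar>)"
  for f :: "'a::euclidean_space \<Rightarrow> real"
  by (cases "(\<lambda>x. \<bar>f x\<bar>) integrable_on S") (auto intro: integral_nonneg simp: not_integrable_integral)

lemma continuous_on_integral_equation:
  fixes f :: "real \<Rightarrow> 'a::banach"
  assumes "f integrable_on {a..b}" and "\<And>s. s \<in> {a..b} \<Longrightarrow> U s = u + integral {a..s} f"
  shows "continuous_on {a..b} U"
proof -
  have "continuous_on {a..b} (\<lambda>s. u + integral {a..s} f)"
    using assms(1) by (intro continuous_intros indefinite_integral_continuous_1)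
  then show ?thesis by (rule continuous_on_eq) (simp add: assms(2))
qed

lemma absolutely_integrable_if_bounded_below:
  fixes f :: "real \<Rightarrow> real"
  assumes f: "f integrable_on {a..b}" and below: "\<And>r. r \<in> {a..b} \<Longrightarrow> - c \<le> f r"
  shows "f absolutely_integrable_on {a..b}"
proof (rule absolutely_integrable_integrable_bound[OF _ f])
  show "(\<lambda>r. f r + 2 * \<bar>c\<bar>) integrable_on {a..b}"
    by (intro integrable_add f integrable_const_ivl)
  show "norm (f r) \<le> f r + 2 * \<bar>c\<bar>" if "r \<in> {a..b}" for r
    using below[OF that] by auto
qed

lemma integrable_on_Lipschitz_perturbation:
  fixes F :: "real \<Rightarrow> real \<Rightarrow> real"
  assumes int: "(\<lambda>r. F r (U r)) integrable_on {a..b}"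
    and meas: "(\<lambda>r. F r 0) \<in> borel_measurable (lebesgue_on {a..b})"
    and lip: "\<And>r z. \<bar>F r z - F r 0\<bar> \<le> K * \<bar>z\<bar>" and U: "continuous_on {a..b} U"
  shows "(\<lambda>r. F r 0) integrable_on {a..b}"
proof -
  let ?D = "\<lambda>r. F r (U r) - F r 0"
  have "(\<lambda>r. K * \<bar>U r\<bar>) integrable_on {a..b}"
    by (intro integrable_continuous_interval continuous_intros U)
  moreover have "?D \<in> borel_measurable (lebesgue_on {a..b})"
    using integrable_imp_measurable[OF int] meas by measurable
  ultimately have "?D absolutely_integrable_on {a..b}"
    using lip by (intro measurable_bounded_by_integrable_imp_absolutely_integrable) auto
  then have "?D integrable_on {a..b}" by (simp add: absolutely_integrable_on_def)
  from integrable_diff[OF int this] show ?thesis by simp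
qed

lemma integral_abs_le_integral_abs_diff:
  fixes h l :: "real \<Rightarrow> real"
  assumes h: "h absolutely_integrable_on {a..b}" and l: "l integrable_on {a..b}"
    and below: "\<And>r. r \<in> {a..b} \<Longrightarrow> - c \<le> l r" and "0 \<le> c" and "a \<le> b"
  shows "integral {a..b} (\<lambda>r. \<bar>h r\<bar>) \<le>
    integral {a..b} (\<lambda>r. \<bar>h r - l r\<bar>) + integral {a..b} l + 2 * c * (b - a)"
proof -
  have "l absolutely_integrable_on {a..b}"
    by (rule absolutely_integrable_if_bounded_below[OF l below])
  then have "(\<lambda>r. h r - l r) absolutely_integrable_on {a..b}"
    using h by (intro set_integral_diff(1))
  then have hl: "(\<lambda>r. \<bar>h r - l r\<bar>) integrable_on {a..b}"
    by (simp add: absolutely_integrable_on_def)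
  have "\<bar>h r\<bar> \<le> \<bar>h r - l r\<bar> + l r + 2 * c" if "r \<in> {a..b}" for r
    using below[OF that] \<open>0 \<le> c\<close> by arith
  then have "integral {a..b} (\<lambda>r. \<bar>h r\<bar>) \<le> integral {a..b} (\<lambda>r. \<bar>h r - l r\<bar> + l r + 2 * c)"
    using h hl l
    by (intro integral_le) (auto simp: absolutely_integrable_on_def intro!: integrable_add integrable_const_ivl)
  also have "\<dots> = integral {a..b} (\<lambda>r. \<bar>h r - l r\<bar> + l r) + integral {a..b} (\<lambda>r. 2 * c)"
    using hl l by (intro Henstock_Kurzweil_Integration.integral_add integrable_add integrable_const_ivl)
  also have "\<dots> = integral {a..b} (\<lambda>r. \<bar>h r - l r\<bar>) + integral {a..b} l + 2 * c * (b - a)"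
    using hl l \<open>a \<le> b\<close> by (simp add: Henstock_Kurzweil_Integration.integral_add)
  finally show ?thesis .
qed

lemma integral_equation_abs_bound:
  fixes f h U :: "real \<Rightarrow> real"
  assumes f: "f integrable_on {0..t}" and h: "h absolutely_integrable_on {0..t}"
    and close: "\<And>r. r \<in> {0..t} \<Longrightarrow> \<bar>f r - h r\<bar> \<le> K * \<bar>U r\<bar>"
    and U: "continuous_on {0..t} U" and eq: "U s = u + integral {0..s} f" and s: "s \<in> {0..t}"
  shows "\<bar>U s\<bar> \<le> \<bar>u\<bar> + integral {0..t} (\<lambda>r. \<bar>h r\<bar>) + K * integral {0..s} (\<lambda>r. \<bar>U r\<bar>)"
proof -
  have sub: "{0..s} \<subseteq> {0..t}" using s by auto
  have hint: "h integrable_on {0..t}" and habs: "(\<lambda>r. \<bar>h r\<bar>) integrable_on {0..t}"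
    using h by (simp_all add: absolutely_integrable_on_def)
  have hs: "h integrable_on {0..s}" by (rule integrable_subinterval_real[OF hint sub])
  have fs: "f integrable_on {0..s}" by (rule integrable_subinterval_real[OF f sub])
  have Us: "(\<lambda>r. K * \<bar>U r\<bar>) integrable_on {0..s}"
    by (intro integrable_continuous_interval continuous_intros continuous_on_subset[OF U sub])
  have "\<bar>integral {0..s} h\<bar> \<le> integral {0..s} (\<lambda>r. \<bar>h r\<bar>)"
    using Henstock_Kurzweil_Integration.integral_norm_bound_integral[OF hs integrable_subinterval_real[OF habs sub]] by simp
  also have "\<dots> \<le> integral {0..t} (\<lambda>r. \<bar>h r\<bar>)"
    by (rule integral_subset_le[OF sub integrable_subinterval_real[OF habs sub] habs]) simp
  finally have h_part: "\<bar>integral {0..s} h\<bar> \<le> integral {0..t} (\<lambda>r. \<bar>h r\<bar>)" .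
  have "norm (f r - h r) \<le> K * \<bar>U r\<bar>" if "r \<in> {0..s}" for r
    using close[OF subsetD[OF sub that]] by simp
  then have "norm (integral {0..s} (\<lambda>r. f r - h r)) \<le> integral {0..s} (\<lambda>r. K * \<bar>U r\<bar>)"
    by (rule Henstock_Kurzweil_Integration.integral_norm_bound_integral[OF integrable_diff[OF fs hs] Us])
  then have error_part: "\<bar>integral {0..s} (\<lambda>r. f r - h r)\<bar> \<le> K * integral {0..s} (\<lambda>r. \<bar>U r\<bar>)"
    by simp
  have "U s = u + integral {0..s} h + integral {0..s} (\<lambda>r. f r - h r)"
    using eq fs hs by (simp add: Henstock_Kurzweil_Integration.integral_diff)
  then show ?thesis using h_part error_part by linarith
qed

lemma gronwall_inequality:
  fixes \<phi> :: "real \<Rightarrow> real"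
  assumes \<phi>: "continuous_on {0..t} \<phi>" and "K \<ge> 0"
    and bound: "\<And>s. s \<in> {0..t} \<Longrightarrow> \<phi> s \<le> A + K * integral {0..s} \<phi>"
    and s: "s \<in> {0..t}"
  shows "\<phi> s \<le> A * exp (K * s)"
proof -
  define I where "I x = integral {0..x} \<phi>" for x
  define \<Psi> where "\<Psi> x = exp (- K * x) * (A + K * I x)" for x
  have "continuous_on {0..t} I" unfolding I_def
    by (intro indefinite_integral_continuous_1 integrable_continuous_interval \<phi>)
  have I': "(I has_real_derivative \<phi> x) (at x)" if "0 < x" "x < t" for x
    using integral_has_real_derivative[OF \<phi>, of x] that at_within_Icc_at[of 0 x t]
    unfolding I_def by auto
  \<comment> \<open>The integral inequality makes \<Psi> nonincreasing.\<close>
  have "\<Psi> s \<le> \<Psi> 0"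
  proof (rule DERIV_nonpos_imp_decreasing_open[of 0 s])
    show "0 \<le> s" using s by auto
    show "continuous_on {0..s} \<Psi>" unfolding \<Psi>_def
      by (intro continuous_intros continuous_on_subset[OF \<open>continuous_on {0..t} I\<close>]) (use s in auto)
    fix x assume x: "0 < x" "x < s"
    then have "x < t" using s by auto
    have "(\<Psi> has_real_derivative exp (- K * x) * (K * (\<phi> x - (A + K * I x)))) (at x)"
      unfolding \<Psi>_def by (auto intro!: derivative_eq_intros I' x \<open>x < t\<close> simp: algebra_simps)
    moreover have "K * (\<phi> x - (A + K * I x)) \<le> 0"
      using bound[of x] x \<open>x < t\<close> \<open>K \<ge> 0\<close> unfolding I_def by (simp add: mult_nonneg_nonpos)
    ultimately show "\<exists>y. (\<Psi> has_real_derivative y) (at x) \<and> y \<le> 0"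
      by (meson exp_gt_zero less_imp_le mult_nonneg_nonpos)
  qed
  moreover have "\<Psi> 0 = A" by (simp add: \<Psi>_def I_def)
  moreover have "exp (K * s) * \<Psi> s = A + K * I s"
    unfolding \<Psi>_def by (simp add: mult.assoc[symmetric] exp_add[symmetric])
  ultimately have "A + K * I s \<le> exp (K * s) * A"
    by (metis exp_gt_zero mult_left_mono less_imp_le)
  then show ?thesis using bound[OF s] by (simp add: I_def mult.commute)
qed

lemma exp_le_mult_exp_add_one: "exp x \<le> x * exp x + 1" for x :: real
proof -
  have "exp x * (1 - x) \<le> exp x * exp (- x)"
    using exp_ge_add_one_self[of "- x"] by (intro mult_left_mono) auto
  then show ?thesis by (simp add: exp_minus algebra_simps)
qed

lemma gronwall_linear_bound:
  fixes U :: "real \<Rightarrow> real"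
  assumes U: "continuous_on {0..t} U" and "0 \<le> K" and "0 \<le> B"
    and bound: "\<And>s. s \<in> {0..t} \<Longrightarrow> \<bar>U s\<bar> \<le> (\<bar>u\<bar> + B) + K * integral {0..s} (\<lambda>r. \<bar>U r\<bar>)"
    and s: "s \<in> {0..t}"
  shows "\<bar>U s\<bar> \<le> B * exp (K * t) + (t * K * exp (K * t) + 1) * \<bar>u\<bar>"
proof -
  have "continuous_on {0..t} (\<lambda>r. \<bar>U r\<bar>)" by (intro continuous_intros U)
  then have "\<bar>U s\<bar> \<le> (\<bar>u\<bar> + B) * exp (K * s)"
    by (rule gronwall_inequality[OF _ \<open>0 \<le> K\<close> bound s])
  also have "\<dots> \<le> (\<bar>u\<bar> + B) * exp (K * t)"
    using s \<open>0 \<le> K\<close> \<open>0 \<le> B\<close> by (intro mult_left_mono) (auto intro: mult_left_mono)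
  also have "\<dots> \<le> B * exp (K * t) + (t * K * exp (K * t) + 1) * \<bar>u\<bar>"
    using mult_left_mono[OF exp_le_mult_exp_add_one[of "K * t"], of "\<bar>u\<bar>"]
    by (simp add: algebra_simps)
  finally show ?thesis .
qed

section \<open>Lagrangians along curves\<close>

lemma C2_imp_continuous:
  assumes "C2 f"
  shows "continuous_on UNIV f"
proof -
  obtain f' where "\<And>z. (f has_derivative blinfun_apply (f' z)) (at z)"
    using assms unfolding C2_def by blast
  then show ?thesis by (meson continuous_at_imp_continuous_on has_derivative_continuous)
qed

lemma C2_uncurry3_differentiable_middle:
  assumes "C2 (uncurry3 L)"
  shows "(\<lambda>r. L x r v) differentiable at r"
proof -
  obtain L' where L': "\<And>z. (uncurry3 L has_derivative blinfun_apply (L' z)) (at z)"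
    using assms unfolding C2_def by blast
  have "((\<lambda>r. (x, r, v)) has_derivative (\<lambda>h. (0, h, 0))) (at r)"
    by (auto intro!: derivative_eq_intros)
  from has_derivative_compose[OF this L']
  have "((\<lambda>r. uncurry3 L (x, r, v)) has_derivative (\<lambda>h. L' (x, r, v) (0, h, 0))) (at r)" .
  then show ?thesis by (auto simp: uncurry3_def differentiable_def)
qed

lemma partial_r_bounded_nonneg:
  assumes "partial_r_bounded L K"
  shows "0 \<le> K"
proof -
  have "\<bar>deriv (\<lambda>r. L x r v) r\<bar> \<le> K" for x r v
    using assms unfolding partial_r_bounded_def by blast
  then show ?thesis by (meson abs_ge_zero order_trans)
qed

lemma partial_r_bounded_lipschitz:
  assumes "C2 (uncurry3 L)" and "partial_r_bounded L K"
  shows "\<bar>L x a v - L x b v\<bar> \<le> K * \<bar>a - b\<bar>"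
proof -
  have "((\<lambda>r. L x r v) has_field_derivative deriv (\<lambda>r. L x r v) r) (at r within UNIV)" for r
    using C2_uncurry3_differentiable_middle[OF assms(1)] DERIV_deriv_iff_real_differentiable by blast
  moreover have "norm (deriv (\<lambda>r. L x r v) r) \<le> K" for r
    using assms(2) unfolding partial_r_bounded_def by simp
  ultimately have "norm (L x a v - L x b v) \<le> K * norm (a - b)"
    by (intro field_differentiable_bound[OF convex_UNIV]) auto
  then show ?thesis by simp
qed

lemma L2_at_lower_bound:
  assumes "L2_at L r \<theta>b \<theta> c"
  shows "- c \<le> L x r v"
proof -
  have "\<forall>s\<ge>0. 0 \<le> \<theta>b s \<and> 0 \<le> \<theta> s" and "\<theta> (norm v) - c \<le> L x r v"
    using assms unfolding L2_at_def by blast+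
  then have "0 \<le> \<theta> (norm v)" "\<theta> (norm v) - c \<le> L x r v" by simp_all
  then show ?thesis by linarith
qed

lemma W11_imp_continuous_on:
  assumes "W11 t \<xi>"
  shows "continuous_on {0..t} \<xi>"
proof -
  obtain g where g: "g absolutely_integrable_on {0..t}" "\<forall>s\<in>{0..t}. \<xi> s = \<xi> 0 + integral {0..s} g"
    using assms unfolding W11_def by blast
  show ?thesis
  proof (rule continuous_on_integral_equation[where u = "\<xi> 0"])
    show "g integrable_on {0..t}" using g(1) by (simp add: absolutely_integrable_on_def)
    show "\<xi> s = \<xi> 0 + integral {0..s} g" if "s \<in> {0..t}" for s using g(2) that by blast
  qed
qed

lemma minimizer_action_le:
  fixes L :: "'a::euclidean_space \<Rightarrow> real \<Rightarrow> 'a \<Rightarrow> real"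
  assumes L: "continuous_on UNIV (uncurry3 L)" and L2: "L2_at L 0 \<theta>b \<theta> c"
    and "t > 0" and "norm (y - x) \<le> R" and min: "minimizer (\<lambda>z v. L z 0 v) t y x \<xi>"
  shows "integral {0..t} (lag_along (\<lambda>z v. L z 0 v) \<xi>) \<le> t * \<theta>b (R / t)"
proof -
  \<comment> \<open>Compare with the straight segment from y to x, whose speed is at most R/t.\<close>
  define w where "w = (1 / t) *\<^sub>R (x - y)"
  define \<eta> where "\<eta> s = y + s *\<^sub>R w" for s :: real
  have "vector_derivative \<eta> (at r) = w" for r
    unfolding \<eta>_def by (rule vector_derivative_at) (auto intro!: derivative_eq_intros)
  then have lag: "lag_along (\<lambda>z v. L z 0 v) \<eta> = (\<lambda>r. L (\<eta> r) 0 w)"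
    by (simp add: lag_along_def)
  have "\<eta> \<in> Gamma t y x"
    unfolding Gamma_def W11_def using \<open>t > 0\<close>
    by (auto simp: \<eta>_def w_def intro!: exI[of _ "\<lambda>_. w"])
  have "continuous_on {0..t} (\<lambda>r. uncurry3 L (\<eta> r, 0, w))"
    by (rule continuous_on_compose2[OF L]) (auto simp: \<eta>_def intro!: continuous_intros)
  then have cont: "continuous_on {0..t} (\<lambda>r. L (\<eta> r) 0 w)" by (simp add: uncurry3_def)
  have "norm w \<le> R / t"
    using assms(3,4) by (simp add: w_def norm_minus_commute divide_right_mono)
  moreover have "0 \<le> R / t" using \<open>norm w \<le> R / t\<close> norm_ge_zero[of w] by linarith
  moreover have "mono_on {0..} \<theta>b" using L2 unfolding L2_at_def by blast
  ultimately have "\<theta>b (norm w) \<le> \<theta>b (R / t)"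
    by (intro mono_onD[of "{0..}" \<theta>b]) auto
  moreover have "L (\<eta> r) 0 w \<le> \<theta>b (norm w)" for r
    using L2 unfolding L2_at_def by blast
  ultimately have bound: "L (\<eta> r) 0 w \<le> \<theta>b (R / t)" for r
    by (meson order_trans)
  have "lag_along (\<lambda>z v. L z 0 v) \<eta> integrable_on {0..t}"
    unfolding lag by (rule integrable_continuous_interval[OF cont])
  then have "integral {0..t} (lag_along (\<lambda>z v. L z 0 v) \<xi>) \<le> integral {0..t} (lag_along (\<lambda>z v. L z 0 v) \<eta>)"
    using min \<open>\<eta> \<in> Gamma t y x\<close> unfolding minimizer_def by blast
  also have "\<dots> \<le> integral {0..t} (\<lambda>_. \<theta>b (R / t))"
    unfolding lag using cont bound by (intro integral_le integrable_continuous_interval) auto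
  also have "\<dots> = t * \<theta>b (R / t)" using \<open>t > 0\<close> by simp
  finally show ?thesis .
qed

lemma integral_abs_le_action_bound:
  fixes L :: "'a::euclidean_space \<Rightarrow> real \<Rightarrow> 'a \<Rightarrow> real"
  assumes L: "continuous_on UNIV (uncurry3 L)" and L2: "L2_at L 0 \<theta>b \<theta> c"
    and "t > 0" and "norm (y - x) \<le> R" and min: "minimizer (\<lambda>z v. L z 0 v) t y x \<xi>"
    and h: "h absolutely_integrable_on {0..t}"
  shows "integral {0..t} (\<lambda>r. \<bar>h r\<bar>) \<le>
    integral {0..t} (\<lambda>r. \<bar>h r - lag_along (\<lambda>z v. L z 0 v) \<xi> r\<bar>) + t * \<theta>b (R / t) + 2 * c * t"
proof -
  let ?l = "lag_along (\<lambda>z v. L z 0 v) \<xi>"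
  have "?l integrable_on {0..t}" using min by (simp add: minimizer_def)
  moreover have "- c \<le> ?l r" for r unfolding lag_along_def by (rule L2_at_lower_bound[OF L2])
  moreover have "0 < c" using L2 unfolding L2_at_def by simp
  ultimately have "integral {0..t} (\<lambda>r. \<bar>h r\<bar>) \<le>
      integral {0..t} (\<lambda>r. \<bar>h r - ?l r\<bar>) + integral {0..t} ?l + 2 * c * (t - 0)"
    using \<open>t > 0\<close> by (intro integral_abs_le_integral_abs_diff[OF h]) auto
  with minimizer_action_le[OF assms(1-5)] show ?thesis by simp
qed

lemma borel_measurable_along_curve:
  fixes L :: "'a::euclidean_space \<Rightarrow> real \<Rightarrow> 'a \<Rightarrow> real"
  assumes L: "continuous_on UNIV (uncurry3 L)" and \<xi>: "continuous_on {a..b} \<xi>" and "a \<le> b"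
  shows "(\<lambda>r. L (\<xi> r) z (vector_derivative \<xi> (at r))) \<in> borel_measurable (lebesgue_on {a..b})"
proof -
  have "\<xi> \<in> borel_measurable (lebesgue_on {a..b})"
    by (rule continuous_imp_measurable_on_sets_lebesgue[OF \<xi>]) simp
  then have "(\<lambda>r. (\<xi> r, z, vector_derivative \<xi> (at r))) \<in> borel_measurable (lebesgue_on {a..b})"
    by (intro borel_measurable_Pair borel_measurable_const borel_measurable_vector_derivative[OF \<xi> \<open>a \<le> b\<close>])
  from borel_measurable_continuous_on[OF L this] show ?thesis by (simp add: uncurry3_def)
qed

lemma absolutely_integrable_Lagrangian_along_solution:
  fixes Llam :: "'a::euclidean_space \<Rightarrow> real \<Rightarrow> 'a \<Rightarrow> real"
  assumes C2: "C2 (uncurry3 Llam)" and K: "partial_r_bounded Llam K" and "L2 Llam"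
    and \<xi>: "continuous_on {0..t} \<xi>" and U: "continuous_on {0..t} U" and "0 \<le> t"
    and int: "(\<lambda>r. Llam (\<xi> r) (U r) (vector_derivative \<xi> (at r))) integrable_on {0..t}"
  shows "(\<lambda>r. Llam (\<xi> r) 0 (vector_derivative \<xi> (at r))) absolutely_integrable_on {0..t}"
proof -
  have "\<bar>Llam x z v - Llam x 0 v\<bar> \<le> K * \<bar>z\<bar>" for x z v
    using partial_r_bounded_lipschitz[OF C2 K, where b = 0] by simp
  with borel_measurable_along_curve[OF C2_imp_continuous[OF C2] \<xi> \<open>0 \<le> t\<close>]
  have "(\<lambda>r. Llam (\<xi> r) 0 (vector_derivative \<xi> (at r))) integrable_on {0..t}"
    by (intro integrable_on_Lipschitz_perturbation[where F = "\<lambda>r z. Llam (\<xi> r) z (vector_derivative \<xi> (at r))",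
          OF int _ _ U])
  moreover obtain \<theta>b \<theta> c where "L2_at Llam 0 \<theta>b \<theta> c" using \<open>L2 Llam\<close> unfolding L2_def by blast
  ultimately show ?thesis
    by (intro absolutely_integrable_if_bounded_below[where c = c] L2_at_lower_bound)
qed

theorem mainTheorem5:
  fixes L Llam :: "'a::euclidean_space \<Rightarrow> real \<Rightarrow> 'a \<Rightarrow> real"
    and \<theta>b0 \<theta>0 :: "real \<Rightarrow> real" and c0 K Klam t R u :: real
    and x y :: 'a and \<xi> :: "real \<Rightarrow> 'a" and U :: "real \<Rightarrow> real"
  assumes C2L: "C2 (uncurry3 L)" and L1L: "L1 L" and L2L: "L2 L"
    and L3L: "K > 0" "partial_r_bounded L K"
    and L2L0: "L2_at L 0 \<theta>b0 \<theta>0 c0"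
    and C2Llam: "C2 (uncurry3 Llam)" and L1Llam: "L1 Llam" and L2Llam: "L2 Llam"
    and Klam: "partial_r_bounded Llam Klam"
    and tpos: "t > 0" and Rpos: "R > 0" and yx: "norm (y - x) \<le> R"
    and min: "minimizer (\<lambda>z v. L z 0 v) t y x \<xi>"
    and ode_int: "(\<lambda>r. Llam (\<xi> r) (U r) (vector_derivative \<xi> (at r))) integrable_on {0..t}"
    and ode: "\<forall>s\<in>{0..t}. U s = u + integral {0..s} (\<lambda>r. Llam (\<xi> r) (U r) (vector_derivative \<xi> (at r)))"
  shows "\<forall>s\<in>{0..t}. \<bar>U s\<bar> \<le>
           t * ((\<theta>b0 (R / t) + 2 * c0) * exp (Klam * t))
           + (t * Klam * exp (Klam * t) + 1) * \<bar>u\<bar>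
           + exp (Klam * t) * integral {0..t} (\<lambda>r. \<bar>Llam (\<xi> r) 0 (vector_derivative \<xi> (at r))
                                                   - L (\<xi> r) 0 (vector_derivative \<xi> (at r))\<bar>)"
proof -
  have \<xi>: "continuous_on {0..t} \<xi>"
    using min unfolding minimizer_def Gamma_def by (blast intro: W11_imp_continuous_on)
  define v where "v r = vector_derivative \<xi> (at r)" for r
  define h where "h = (\<lambda>r. Llam (\<xi> r) 0 (v r))"
  define l where "l = lag_along (\<lambda>z v. L z 0 v) \<xi>"
  have U: "continuous_on {0..t} U" using ode by (intro continuous_on_integral_equation[OF ode_int]) blast
  have h: "h absolutely_integrable_on {0..t}" unfolding h_def v_def
    using absolutely_integrable_Lagrangian_along_solution[OF C2Llam Klam L2Llam \<xi> U _ ode_int] tpos by simp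
  have lip: "\<bar>Llam (\<xi> r) z (v r) - h r\<bar> \<le> Klam * \<bar>z\<bar>" for r z
    using partial_r_bounded_lipschitz[OF C2Llam Klam, where b = 0] by (simp add: h_def)
  have bound: "\<bar>U s\<bar> \<le> \<bar>u\<bar> + (integral {0..t} (\<lambda>r. \<bar>h r - l r\<bar>) + t * \<theta>b0 (R / t) + 2 * c0 * t)
      + Klam * integral {0..s} (\<lambda>r. \<bar>U r\<bar>)" if "s \<in> {0..t}" for s
    using integral_equation_abs_bound[OF ode_int[folded v_def] h lip U ode[rule_format, OF that, folded v_def] that]
      integral_abs_le_action_bound[OF C2_imp_continuous[OF C2L] L2L0 tpos yx min h]
    unfolding l_def by linarith
  have "0 < c0" "0 \<le> \<theta>b0 (R / t)" using L2L0 tpos Rpos unfolding L2_at_def by auto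
  with integral_abs_nonneg[of "{0..t}" "\<lambda>r. h r - l r"] tpos
  have "0 \<le> integral {0..t} (\<lambda>r. \<bar>h r - l r\<bar>) + t * \<theta>b0 (R / t) + 2 * c0 * t" by simp
  from gronwall_linear_bound[OF U partial_r_bounded_nonneg[OF Klam] this bound]
  show ?thesis unfolding h_def l_def lag_along_def v_def by (simp add: algebra_simps)
qed

end
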